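(* Let $f(x)=\frac{1}{\sqrt{2\pi}}\ln(1+x)$ for $x\ge0$, let $d>0$, let $u(x)=\frac1d(e+x)\big(\ln(e+x)\big)^2$, and let $g(x)=u(f(x))-f(x)$. Then: 1. If $0<d\le1$, then $g\ge f$ and $g$ is increasing on $[0,\infty)$. 2. $\int_0^\infty\frac{f'(x)}{f(x)+g(x)}\,dx=d$. *)

theory Defs
  imports "HOL-Analysis.Analysis"
begin

definition f7 :: "real \<Rightarrow> real" where
  "f7 x = ln (1 + x) / sqrt (2 * pi)"

definition u7 :: "real \<Rightarrow> real \<Rightarrow> real" where
  "u7 d x = (1 / d) * (exp 1 + x) * (ln (exp 1 + x))\<^sup>2"

definition g7 :: "real \<Rightarrow> real \<Rightarrow> real" where
  "g7 d x = u7 d (f7 x) - f7 x"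

end

theory Submission
  imports Defs
begin

(* Since f + g = u \<circ> f, the integrand is f' / u(f), and y \<mapsto> -d / ln (e + y) is an antiderivative
   of 1 / u on [0, \<infinity>). Composing with f, which grows to \<infinity>, the integral is the increment
   0 - (-d / ln e) = d. For the first part, x (ln x)^2 has slope (ln x)^2 + 2 ln x \<ge> 3 for
   x \<ge> e, so for d \<le> 1 the map y \<mapsto> u(y) - y is increasing and u(y) \<ge> u(0) + 3y \<ge> 2y;
   substituting y = f(x), with f increasing and nonnegative, gives both claims about g. *)

lemma has_integral_atLeast_FTC_nonneg:
  fixes F h :: "real \<Rightarrow> real"
  assumes deriv: "\<And>x. a \<le> x \<Longrightarrow> (F has_real_derivative h x) (at x within {a..})"
    and nonneg: "\<And>x. a \<le> x \<Longrightarrow> 0 \<le> h x"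
    and lim: "(F \<longlongrightarrow> L) at_top"
  shows "(h has_integral (L - F a)) {a..}"
proof (rule has_integral_to_inf)
  have FTC: "(h has_integral (F y - F a)) {a..y}" if "a \<le> y" for y
  proof (rule fundamental_theorem_of_calculus[OF that])
    fix x assume "x \<in> {a..y}"
    then show "(F has_vector_derivative h x) (at x within {a..y})"
      using deriv[of x] has_vector_derivative_within_subset[of F "h x" x "{a..}" "{a..y}"]
      by (auto simp: has_real_derivative_iff_has_vector_derivative)
  qed
  show "h integrable_on {a..y}" for y
    using FTC by (cases "a \<le> y") auto
  have "\<forall>\<^sub>F y in at_top. integral {a..y} h = F y - F a"
    using FTC by (auto intro: eventually_at_top_linorderI)
  moreover have "((\<lambda>y. F y - F a) \<longlongrightarrow> L - F a) at_top"
    by (intro tendsto_diff lim tendsto_const)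
  ultimately show "((\<lambda>y. integral {a..y} h) \<longlongrightarrow> L - F a) at_top"
    by (rule tendsto_cong[THEN iffD2])
qed (use nonneg in auto)

lemma times_ln_power2_diff_ge:
  fixes s t :: real
  assumes "exp 1 \<le> s" "s \<le> t"
  shows "3 * (t - s) \<le> t * (ln t)\<^sup>2 - s * (ln s)\<^sup>2"
proof -
  have s: "0 < s"
    using assms(1) exp_gt_zero[of 1] by linarith
  have ln_s: "1 \<le> ln s"
    using ln_le_cancel_iff[of "exp 1" s] assms(1) s by simp
  have ratio_nonneg: "0 \<le> (t - s) / t"
    using s assms(2) by simp
  have "ln s + (t - s) / t \<le> ln t"
    using ln_diff_le[of s t] s assms(2) minus_divide_left[of "t - s" t] by simp
  then have "(ln s + (t - s) / t)\<^sup>2 \<le> (ln t)\<^sup>2"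
    using ln_s ratio_nonneg by (intro power_mono) linarith+
  then have "(ln s)\<^sup>2 + 2 * ln s * ((t - s) / t) \<le> (ln t)\<^sup>2"
    unfolding power2_sum using zero_le_power2[of "(t - s) / t"] by linarith
  from mult_left_mono[OF this, of t]
  have "t * (ln s)\<^sup>2 + 2 * ln s * (t - s) \<le> t * (ln t)\<^sup>2"
    using s assms(2) by (simp add: distrib_left)
  moreover have "3 \<le> (ln s)\<^sup>2 + 2 * ln s"
    using ln_s one_le_power[OF ln_s, of 2] by linarith
  then have "3 * (t - s) \<le> ((ln s)\<^sup>2 + 2 * ln s) * (t - s)"
    using assms(2) by (intro mult_right_mono) auto
  ultimately show ?thesis
    by (simp add: algebra_simps)
qed

lemma inverse_u7_antiderivative:
  assumes "1 - exp 1 < y"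
  shows "((\<lambda>y. - d / ln (exp 1 + y)) has_real_derivative inverse (u7 d y)) (at y)"
proof -
  have pos: "0 < exp 1 + y" "0 < ln (exp 1 + y)"
    using assms by auto
  show ?thesis
    unfolding u7_def using pos
    by (auto intro!: derivative_eq_intros simp: field_simps power2_eq_square)
qed

lemma u7_diff_ge:
  assumes "0 < d" "d \<le> 1" "0 \<le> a" "a \<le> b"
  shows "3 * (b - a) \<le> u7 d b - u7 d a"
proof -
  let ?w = "\<lambda>y. (exp 1 + y) * (ln (exp 1 + y))\<^sup>2"
  have w: "3 * (b - a) \<le> ?w b - ?w a"
    using times_ln_power2_diff_ge[of "exp 1 + a" "exp 1 + b"] assms(3,4) by simp
  have "?w b - ?w a \<le> (?w b - ?w a) / d"
    using w assms(1,2,4) by (simp add: le_divide_eq mult_left_le)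
  also have "\<dots> = u7 d b - u7 d a"
    by (simp add: u7_def diff_divide_distrib)
  finally show ?thesis using w by linarith
qed

lemma u7_pos: "0 < d \<Longrightarrow> 0 \<le> y \<Longrightarrow> 0 < u7 d y"
proof -
  assume "0 < d" "0 \<le> y"
  moreover have "1 < exp (1::real)" by simp
  ultimately have "1 < exp 1 + y" by linarith
  then have "0 < exp 1 + y" "0 < ln (exp 1 + y)" by auto
  with \<open>0 < d\<close> show ?thesis by (simp add: u7_def)
qed

lemma u7_ge_double: "0 < d \<Longrightarrow> d \<le> 1 \<Longrightarrow> 0 \<le> y \<Longrightarrow> 2 * y \<le> u7 d y"
  using u7_diff_ge[of d 0 y] u7_pos[of d 0] by fastforce

lemma f7_nonneg: "0 \<le> x \<Longrightarrow> 0 \<le> f7 x"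
  by (simp add: f7_def)

lemma f7_mono: "0 \<le> x \<Longrightarrow> x \<le> y \<Longrightarrow> f7 x \<le> f7 y"
  by (simp add: f7_def divide_right_mono)

lemma f7_has_real_derivative: "-1 < x \<Longrightarrow> (f7 has_real_derivative 1 / (1 + x) / sqrt (2 * pi)) (at x)"
  unfolding f7_def[abs_def] by (intro DERIV_cdivide) (auto intro!: derivative_eq_intros)

lemma deriv_f7: "-1 < x \<Longrightarrow> deriv f7 x = 1 / (1 + x) / sqrt (2 * pi)"
  by (intro DERIV_imp_deriv f7_has_real_derivative)

lemma f7_at_top: "filterlim f7 at_top at_top"
proof -
  have "filterlim (\<lambda>x::real. 1 + x) at_top at_top"
    by (rule filterlim_tendsto_add_at_top[OF tendsto_const filterlim_ident])
  from filterlim_compose[OF ln_at_top this]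
  have ln_shift_at_top: "filterlim (\<lambda>x::real. ln (1 + x)) at_top at_top" .
  have "filterlim (\<lambda>x::real. inverse (sqrt (2 * pi)) * ln (1 + x)) at_top at_top"
    by (rule filterlim_tendsto_pos_mult_at_top[OF tendsto_const _ ln_shift_at_top]) simp
  then show ?thesis
    unfolding f7_def[abs_def] by (simp add: divide_inverse mult.commute)
qed

lemma sum_f7_g7: "f7 x + g7 d x = u7 d (f7 x)"
  by (simp add: g7_def)

lemma integrand_antiderivative:
  assumes "0 \<le> x"
  shows "((\<lambda>x. - d / ln (exp 1 + f7 x)) has_real_derivative deriv f7 x / (f7 x + g7 d x)) (at x)"
proof -
  have "1 - exp 1 < f7 x"
    using f7_nonneg[OF assms] exp_ge_add_one_self[of 1] by linarith
  from DERIV_chain2[OF inverse_u7_antiderivative[OF this] f7_has_real_derivative]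
  show ?thesis
    using assms by (simp add: deriv_f7 sum_f7_g7 divide_inverse mult.commute)
qed

lemma integrand_nonneg: "0 < d \<Longrightarrow> 0 \<le> x \<Longrightarrow> 0 \<le> deriv f7 x / (f7 x + g7 d x)"
  using u7_pos f7_nonneg by (simp add: deriv_f7 sum_f7_g7 less_imp_le)

lemma antiderivative_tendsto_0: "((\<lambda>x. - d / ln (exp 1 + f7 x)) \<longlongrightarrow> 0) at_top"
proof -
  have "filterlim (\<lambda>x. ln (exp 1 + f7 x)) at_top at_top"
    by (rule filterlim_compose[OF ln_at_top filterlim_tendsto_add_at_top[OF tendsto_const f7_at_top]])
  then show ?thesis
    by (intro tendsto_divide_0[OF tendsto_const] filterlim_at_top_imp_at_infinity)
qed

theorem lemma7:
  fixes d :: real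
  assumes "d > 0"
  shows "(d \<le> 1 \<longrightarrow> (\<forall>x\<ge>0. g7 d x \<ge> f7 x) \<and> mono_on {0..} (g7 d))
         \<and> ((\<lambda>x. deriv f7 x / (f7 x + g7 d x)) has_integral d) {0..}"
proof (intro conjI impI)
  assume "d \<le> 1"
  show "\<forall>x\<ge>0. g7 d x \<ge> f7 x"
    using u7_ge_double[OF assms \<open>d \<le> 1\<close> f7_nonneg] by (simp add: g7_def)
  show "mono_on {0..} (g7 d)"
  proof (rule mono_onI)
    fix x y :: real
    assume "x \<in> {0..}" "x \<le> y"
    then have "0 \<le> f7 x" "f7 x \<le> f7 y"
      by (auto intro: f7_nonneg f7_mono)
    with u7_diff_ge[OF assms \<open>d \<le> 1\<close> this] show "g7 d x \<le> g7 d y"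
      by (simp add: g7_def algebra_simps)
  qed
next
  have "((\<lambda>x. deriv f7 x / (f7 x + g7 d x)) has_integral (0 - (- d / ln (exp 1 + f7 0)))) {0..}"
    by (rule has_integral_atLeast_FTC_nonneg[OF has_field_derivative_at_within[OF integrand_antiderivative]
          integrand_nonneg[OF assms] antiderivative_tendsto_0])
  then show "((\<lambda>x. deriv f7 x / (f7 x + g7 d x)) has_integral d) {0..}"
    by (simp add: f7_def)
qed

end
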